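(* Let $G=(V,E)$ be a multigraph with vertices $u_1,\dots,u_k$ ($k\ge2$) and edges $e_1,\dots,e_\ell$ with $\ell>2k$, and consider the fair division instance $\mathcal{I}(G)$ described in the context. If $G$ has an independent set of size $t$, then $\mathcal{I}(G)$ has an EF1 allocation with social welfare at least $t$.
   Context: Instance $\mathcal{I}(G)$: agents are $a_i^{(j)}$ ($1\le i\le\ell$, $1\le j\le k$) and $s^{(j)}$ ($1\le j\le k$), so $n=k\ell+k$. Items are $b_r^{(j)}$ ($1\le r\le k$, $1\le j\le k$), with $B^{(j)}=\{b_1^{(j)},\dots,b_k^{(j)}\}$, and $c_1,\dots,c_{k^2}$ forming $C$, so $m=2k^2$. Let $\tau=2/k^2$. Agent $s^{(j)}$ values each item of $B^{(j)}$ at $1/k$ and every other item at $0$. If edge $e_i$ has endpoints $u_{i_1},u_{i_2}$, agent $a_i^{(j)}$ values each of $b_{i_1}^{(j)},b_{i_2}^{(j)}$ at $\tau/2$, each item of $C$ at $(1-\tau)/k^2$, and every other item at $0$. Valuations are additive (and normalized). An allocation is a partition of the items among agents; it is EF1 if for all agents $x\ne y$ with $A_y\ne\emptyset$ there is $g\in A_y$ with $v_x(A_x)\ge v_x(A_y\setminus\{g\})$; social welfare is $\sum_x v_x(A_x)$. An independent set is a set of vertices no two of which are joined by an edge. *)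

theory Defs
  imports Main "HOL-Library.Multiset" Complex_Main
begin

text \<open>Multigraph on vertices 1..k with edges 1..l; edge i has endpoints
  fst (ep i) and snd (ep i) (distinct, parallel edges allowed).\<close>

definition valid_multigraph :: "nat \<Rightarrow> nat \<Rightarrow> (nat \<Rightarrow> nat \<times> nat) \<Rightarrow> bool" where
  "valid_multigraph k l ep \<longleftrightarrow>
     (\<forall>i\<in>{1..l}. fst (ep i) \<in> {1..k} \<and> snd (ep i) \<in> {1..k} \<and> fst (ep i) \<noteq> snd (ep i))"

definition independent_set :: "nat \<Rightarrow> nat \<Rightarrow> (nat \<Rightarrow> nat \<times> nat) \<Rightarrow> nat set \<Rightarrow> bool" where
  "independent_set k l ep I \<longleftrightarrow> I \<subseteq> {1..k} \<and>
     (\<forall>u\<in>I. \<forall>w\<in>I. \<not> (\<exists>i\<in>{1..l}. ep i = (u, w) \<or> ep i = (w, u)))"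

datatype agent = Ag nat nat  \<comment> \<open>Ag i j = a_i^(j)\<close>
               | Sg nat      \<comment> \<open>Sg j = s^(j)\<close>

datatype item = Bi nat nat   \<comment> \<open>Bi r j = b_r^(j)\<close>
              | Ci nat       \<comment> \<open>Ci c = c_c\<close>

definition agents :: "nat \<Rightarrow> nat \<Rightarrow> agent set" where
  "agents k l = {Ag i j | i j. i \<in> {1..l} \<and> j \<in> {1..k}} \<union> {Sg j | j. j \<in> {1..k}}"

definition items :: "nat \<Rightarrow> item set" where
  "items k = {Bi r j | r j. r \<in> {1..k} \<and> j \<in> {1..k}} \<union> {Ci c | c. c \<in> {1..k^2}}"

definition tau :: "nat \<Rightarrow> real" where
  "tau k = 2 / (real k)^2"

fun val :: "nat \<Rightarrow> (nat \<Rightarrow> nat \<times> nat) \<Rightarrow> agent \<Rightarrow> item \<Rightarrow> real" where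
  "val k ep (Sg j) (Bi r j') = (if j' = j then 1 / real k else 0)"
| "val k ep (Sg j) (Ci c) = 0"
| "val k ep (Ag i j) (Bi r j') =
     (if j' = j \<and> (r = fst (ep i) \<or> r = snd (ep i)) then tau k / 2 else 0)"
| "val k ep (Ag i j) (Ci c) = (1 - tau k) / (real k)^2"

definition bundle_val :: "nat \<Rightarrow> (nat \<Rightarrow> nat \<times> nat) \<Rightarrow> agent \<Rightarrow> item set \<Rightarrow> real" where
  "bundle_val k ep x A = (\<Sum>g\<in>A. val k ep x g)"

text \<open>An allocation (partition of the items among the agents) is given by a map
  assigning each item to an agent; the bundle of agent x is its preimage.\<close>

definition is_allocation :: "nat \<Rightarrow> nat \<Rightarrow> (item \<Rightarrow> agent) \<Rightarrow> bool" where
  "is_allocation k l \<pi> \<longleftrightarrow> (\<forall>g\<in>items k. \<pi> g \<in> agents k l)"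

definition bundleOf :: "nat \<Rightarrow> (item \<Rightarrow> agent) \<Rightarrow> agent \<Rightarrow> item set" where
  "bundleOf k \<pi> x = {g \<in> items k. \<pi> g = x}"

definition EF1 :: "nat \<Rightarrow> nat \<Rightarrow> (nat \<Rightarrow> nat \<times> nat) \<Rightarrow> (item \<Rightarrow> agent) \<Rightarrow> bool" where
  "EF1 k l ep \<pi> \<longleftrightarrow>
     (\<forall>x\<in>agents k l. \<forall>y\<in>agents k l. x \<noteq> y \<and> bundleOf k \<pi> y \<noteq> {} \<longrightarrow>
        (\<exists>g\<in>bundleOf k \<pi> y.
           bundle_val k ep x (bundleOf k \<pi> x) \<ge> bundle_val k ep x (bundleOf k \<pi> y - {g})))"

definition social_welfare :: "nat \<Rightarrow> nat \<Rightarrow> (nat \<Rightarrow> nat \<times> nat) \<Rightarrow> (item \<Rightarrow> agent) \<Rightarrow> real" where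
  "social_welfare k l ep \<pi> = (\<Sum>x\<in>agents k l. bundle_val k ep x (bundleOf k \<pi> x))"

end

theory Submission
  imports Defs
begin

text \<open>Give agent s(j) the items b_r(j) with u_r in the independent set I, and every
  other item to its own edge agent (possible since there are more than 2k edges). Then every
  edge agent holds at most one item, and as I contains at most one endpoint of each edge, no
  agent values more than one item in the bundle of any s(j); dropping that item leaves a
  worthless bundle, so the allocation is EF1. Each s(j) receives value |I|/k, so the
  welfare is at least |I|.\<close>

lemma finite_agents: "finite (agents k l)"
proof -
  have "agents k l = (\<lambda>(i, j). Ag i j) ` ({1..l} \<times> {1..k}) \<union> Sg ` {1..k}"
    unfolding agents_def by auto
  then show ?thesis by simp
qed

lemma tau_le_one:
  assumes "k \<ge> 2" shows "tau k \<le> 1"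
proof -
  have "(2::real) ^ 2 \<le> real k ^ 2"
    using assms by (intro power_mono) simp_all
  then show ?thesis unfolding tau_def by (simp add: divide_le_eq)
qed

lemma val_nonneg: "k \<ge> 2 \<Longrightarrow> 0 \<le> val k ep x g"
  using tau_le_one[of k] by (cases x; cases g) (auto simp: tau_def)

lemma bundle_val_nonneg: "k \<ge> 2 \<Longrightarrow> 0 \<le> bundle_val k ep x A"
  unfolding bundle_val_def by (simp add: sum_nonneg val_nonneg)

lemma bundle_val_remove_only_valued:
  assumes "g \<in> B" and "\<forall>h\<in>B. val k ep x h \<noteq> 0 \<longrightarrow> h = g"
  shows "bundle_val k ep x (B - {g}) = 0"
  unfolding bundle_val_def using assms by (intro sum.neutral) blast

lemma EF1_if_at_most_one_valued:
  assumes "k \<ge> 2"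
    and at_most_one: "\<And>x y g h. x \<in> agents k l \<Longrightarrow> y \<in> agents k l \<Longrightarrow> x \<noteq> y \<Longrightarrow>
        g \<in> bundleOf k \<pi> y \<Longrightarrow> h \<in> bundleOf k \<pi> y \<Longrightarrow>
        val k ep x g \<noteq> 0 \<Longrightarrow> val k ep x h \<noteq> 0 \<Longrightarrow> g = h"
  shows "EF1 k l ep \<pi>"
  unfolding EF1_def
proof (intro ballI impI)
  fix x y assume x: "x \<in> agents k l" and y: "y \<in> agents k l"
    and xy: "x \<noteq> y \<and> bundleOf k \<pi> y \<noteq> {}"
  obtain g where g: "g \<in> bundleOf k \<pi> y" "\<forall>h\<in>bundleOf k \<pi> y. val k ep x h \<noteq> 0 \<longrightarrow> h = g"
  proof (cases "\<exists>g\<in>bundleOf k \<pi> y. val k ep x g \<noteq> 0")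
    case True
    then show ?thesis using that at_most_one[OF x y] xy by blast
  next
    case False
    then show ?thesis using that xy by blast
  qed
  have "bundle_val k ep x (bundleOf k \<pi> y - {g}) = 0"
    using bundle_val_remove_only_valued[OF g] .
  then show "\<exists>g\<in>bundleOf k \<pi> y.
      bundle_val k ep x (bundleOf k \<pi> x) \<ge> bundle_val k ep x (bundleOf k \<pi> y - {g})"
    using g(1) bundle_val_nonneg[OF \<open>k \<ge> 2\<close>, of ep x] by force
qed

lemma independent_set_endpoint_unique:
  assumes "independent_set k l ep I" and "i \<in> {1..l}"
    and "r \<in> I" "r' \<in> I"
    and "r = fst (ep i) \<or> r = snd (ep i)" "r' = fst (ep i) \<or> r' = snd (ep i)"
  shows "r = r'"
proof (rule ccontr)
  assume "r \<noteq> r'"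
  then have "ep i = (r, r') \<or> ep i = (r', r)"
    using assms(5,6) by (metis prod.collapse)
  then show False using assms(1-4) unfolding independent_set_def by blast
qed

text \<open>Item c_c goes to a_i(j) with c - 1 = (j - 1) k + (i - k - 1), so C fills the agents
  with k < i \<le> 2k exactly once; b_r(j) with u_r \<notin> I goes to a_r(j), kept apart from
  those by r \<le> k.\<close>

definition indep_alloc :: "nat \<Rightarrow> nat set \<Rightarrow> item \<Rightarrow> agent" where
  "indep_alloc k I g = (case g of
       Bi r j \<Rightarrow> if r \<in> I then Sg j else Ag r j
     | Ci c \<Rightarrow> Ag (k + 1 + (c - 1) mod k) ((c - 1) div k + 1))"

lemma is_allocation_indep_alloc:
  assumes "independent_set k l ep I" and "2 * k \<le> l"
  shows "is_allocation k l (indep_alloc k I)"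
  unfolding is_allocation_def
proof
  fix g assume g: "g \<in> items k"
  show "indep_alloc k I g \<in> agents k l"
  proof (cases g)
    case (Bi r j)
    then show ?thesis
      using g assms unfolding items_def agents_def indep_alloc_def by auto
  next
    case (Ci c)
    with g have c: "1 \<le> c" "c \<le> k * k"
      unfolding items_def by (auto simp: power2_eq_square)
    then have kpos: "k > 0" by (cases k) auto
    have "(c - 1) div k < k"
      using c by (intro less_mult_imp_div_less) linarith
    moreover have "k + 1 + (c - 1) mod k \<le> l"
      using kpos assms(2) mod_less_divisor[OF kpos, of "c - 1"] by linarith
    ultimately show ?thesis
      using Ci assms(2) unfolding agents_def indep_alloc_def by auto
  qed
qed

lemma indep_alloc_Ag_inj:
  assumes "g \<in> items k" "h \<in> items k"
    and "indep_alloc k I g = Ag i j" "indep_alloc k I h = Ag i j"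
  shows "g = h"
proof (cases g; cases h)
  fix c c' assume gc: "g = Ci c" and hc: "h = Ci c'"
  have "(c - 1) mod k = (c' - 1) mod k" "(c - 1) div k = (c' - 1) div k"
    using assms(3,4) gc hc unfolding indep_alloc_def by auto
  then have "c - 1 = c' - 1" by (metis div_mult_mod_eq)
  moreover have "1 \<le> c" "1 \<le> c'" using assms(1,2) gc hc unfolding items_def by auto
  ultimately show ?thesis using gc hc by simp
qed (use assms in \<open>auto simp: items_def indep_alloc_def split: if_splits\<close>)

lemma bundleOf_indep_alloc_Sg:
  assumes "independent_set k l ep I" and "j \<in> {1..k}"
  shows "bundleOf k (indep_alloc k I) (Sg j) = (\<lambda>r. Bi r j) ` I"
proof
  show "bundleOf k (indep_alloc k I) (Sg j) \<subseteq> (\<lambda>r. Bi r j) ` I"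
  proof
    fix g assume "g \<in> bundleOf k (indep_alloc k I) (Sg j)"
    then show "g \<in> (\<lambda>r. Bi r j) ` I"
      unfolding bundleOf_def by (cases g) (auto simp: indep_alloc_def split: if_splits)
  qed
  show "(\<lambda>r. Bi r j) ` I \<subseteq> bundleOf k (indep_alloc k I) (Sg j)"
    using assms unfolding bundleOf_def items_def indep_alloc_def independent_set_def by auto
qed

lemma EF1_indep_alloc:
  assumes "k \<ge> 2" and "independent_set k l ep I"
  shows "EF1 k l ep (indep_alloc k I)"
proof (rule EF1_if_at_most_one_valued[OF \<open>k \<ge> 2\<close>])
  fix x y g h
  assume x: "x \<in> agents k l" and y: "y \<in> agents k l" and "x \<noteq> y"
    and g: "g \<in> bundleOf k (indep_alloc k I) y" and h: "h \<in> bundleOf k (indep_alloc k I) y"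
    and vg: "val k ep x g \<noteq> 0" and vh: "val k ep x h \<noteq> 0"
  show "g = h"
  proof (cases y)
    case (Ag i j)
    then show ?thesis using g h indep_alloc_Ag_inj unfolding bundleOf_def by auto
  next
    case (Sg j')
    with y have "j' \<in> {1..k}" unfolding agents_def by auto
    then obtain r r' where r: "r \<in> I" "g = Bi r j'" and r': "r' \<in> I" "h = Bi r' j'"
      using g h bundleOf_indep_alloc_Sg[OF assms(2)] Sg by auto
    show ?thesis
    proof (cases x)
      case (Sg j)
      then show ?thesis using \<open>x \<noteq> y\<close> \<open>y = Sg j'\<close> vg r by simp
    next
      case (Ag i j)
      with x have "i \<in> {1..l}" unfolding agents_def by auto
      moreover have "r = fst (ep i) \<or> r = snd (ep i)" "r' = fst (ep i) \<or> r' = snd (ep i)"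
        using vg vh r r' Ag by (auto split: if_splits)
      ultimately show ?thesis
        using independent_set_endpoint_unique[OF assms(2)] r r' by blast
    qed
  qed
qed

lemma social_welfare_indep_alloc:
  assumes "k \<ge> 2" and "independent_set k l ep I"
  shows "real (card I) \<le> social_welfare k l ep (indep_alloc k I)"
proof -
  let ?w = "\<lambda>x. bundle_val k ep x (bundleOf k (indep_alloc k I) x)"
  have w_Sg: "?w (Sg j) = real (card I) / real k" if "j \<in> {1..k}" for j
  proof -
    have "?w (Sg j) = (\<Sum>r\<in>I. val k ep (Sg j) (Bi r j))"
      unfolding bundleOf_indep_alloc_Sg[OF assms(2) that] bundle_val_def
      by (subst sum.reindex) (auto simp: inj_on_def)
    then show ?thesis by simp
  qed
  have "real (card I) = (\<Sum>j\<in>{1..k}. real (card I) / real k)"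
    using assms(1) by simp
  also have "\<dots> = (\<Sum>x\<in>Sg ` {1..k}. ?w x)"
    using w_Sg by (simp add: sum.reindex inj_on_def)
  also have "\<dots> \<le> (\<Sum>x\<in>agents k l. ?w x)"
    by (intro sum_mono2 finite_agents bundle_val_nonneg[OF assms(1)])
      (auto simp: agents_def)
  finally show ?thesis unfolding social_welfare_def .
qed

theorem mainTheorem12:
  fixes k l t :: nat and ep :: "nat \<Rightarrow> nat \<times> nat" and I :: "nat set"
  assumes "k \<ge> 2" and "l > 2 * k"
    and "valid_multigraph k l ep"
    and "independent_set k l ep I" and "card I = t"
  shows "\<exists>\<pi>. is_allocation k l \<pi> \<and> EF1 k l ep \<pi> \<and> social_welfare k l ep \<pi> \<ge> real t"
proof (intro exI conjI)
  show "is_allocation k l (indep_alloc k I)"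
    using is_allocation_indep_alloc assms(2,4) by simp
  show "EF1 k l ep (indep_alloc k I)"
    using EF1_indep_alloc assms(1,4) .
  show "real t \<le> social_welfare k l ep (indep_alloc k I)"
    using social_welfare_indep_alloc assms(1,4,5) by blast
qed

end
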